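(* Let $F$ be a finite extension of $\mathbb{Q}_2$ with absolute ramification index $e_F$, and let $E/F$ be a ramified quadratic extension whose break number $b$ is odd. If $\kappa\in F^*\setminus(E^* )^2$, then $$\mathrm{def}_E(\kappa)\ge g_{F,b}(\mathrm{def}_F(\kappa)),$$ with equality whenever $\mathrm{def}_F(\kappa)\ne 2e_F-b$. Consequently, if $\delta\ge0$ and $\mathrm{def}_F(\kappa)\ge\delta$, then $\mathrm{def}_E(\kappa)\ge g_{F,b}(\delta)\ge b$.
   Context: $v_F$ denotes the normalized valuation of $F$. Quadratic defect: for $\kappa\in F^*$, $\mathrm{def}_F(\kappa)=\infty$ if $\kappa\in (F^* )^2$, $\mathrm{def}_F(\kappa)=0$ if $v_F(\kappa)$ is odd, and otherwise $\mathrm{def}_F(\kappa)=\max\{v_F(c^2\kappa-1): c\in F^*\}$. The break number of a ramified quadratic extension $E/F$ with $\mathrm{Gal}(E/F)=\{1,s\}$ is $v_E(s(\pi_E)-\pi_E)-1$. The function $g_{F,b}$ is $g_{F,b}(x)=\min\{2x+b,\,x+2e_F\}$. *)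

theory Defs
  imports "HOL-Analysis.Analysis"
begin

text \<open>A normalized discrete valuation on a field, given as a map to int
  (its value at 0 is irrelevant; v 0 = infinity is left implicit).\<close>
definition normalized_dval :: "('a::field \<Rightarrow> int) \<Rightarrow> bool" where
  "normalized_dval v \<longleftrightarrow>
     (\<forall>x y. x \<noteq> 0 \<longrightarrow> y \<noteq> 0 \<longrightarrow> v (x * y) = v x + v y) \<and>
     (\<forall>x y. x \<noteq> 0 \<longrightarrow> y \<noteq> 0 \<longrightarrow> x + y \<noteq> 0 \<longrightarrow> min (v x) (v y) \<le> v (x + y)) \<and>
     (\<exists>p. p \<noteq> 0 \<and> v p = 1)"

definition val_complete :: "('a::field \<Rightarrow> int) \<Rightarrow> bool" where
  "val_complete v \<longleftrightarrow>
     (\<forall>X :: nat \<Rightarrow> 'a.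
        (\<forall>N::int. \<exists>M. \<forall>m\<ge>M. \<forall>n\<ge>M. X m = X n \<or> N \<le> v (X m - X n)) \<longrightarrow>
        (\<exists>L. \<forall>N::int. \<exists>M. \<forall>n\<ge>M. X n = L \<or> N \<le> v (X n - L)))"

definition finite_residue_field :: "('a::field \<Rightarrow> int) \<Rightarrow> bool" where
  "finite_residue_field v \<longleftrightarrow>
     (\<exists>R. finite R \<and> (\<forall>x. (x = 0 \<or> 0 \<le> v x) \<longrightarrow> (\<exists>r\<in>R. x = r \<or> 0 < v (x - r))))"

text \<open>A finite extension of Q_2, characterized (for a field of characteristic 0)
  as a field complete for a normalized discrete valuation with finite residue
  field of characteristic 2 (i.e. v 2 > 0).\<close>
definition local_field_over_Q2 :: "('a::field_char_0 \<Rightarrow> int) \<Rightarrow> bool" where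
  "local_field_over_Q2 v \<longleftrightarrow>
     normalized_dval v \<and> val_complete v \<and> finite_residue_field v \<and> 0 < v 2"

definition abs_ram_index :: "('a::field_char_0 \<Rightarrow> int) \<Rightarrow> int" where
  "abs_ram_index v = v 2"

text \<open>Quadratic defect (value infinity encoded as ereal infinity; the maximum
  is expressed as a supremum, which equals the maximum when it exists).\<close>
definition qdef :: "('a::field \<Rightarrow> int) \<Rightarrow> 'a \<Rightarrow> ereal" where
  "qdef v k =
     (if \<exists>c. c \<noteq> 0 \<and> k = c\<^sup>2 then \<infinity>
      else if odd (v k) then 0
      else Sup {ereal (real_of_int (v (c\<^sup>2 * k - 1))) | c. c \<noteq> 0})"

definition gFb :: "int \<Rightarrow> int \<Rightarrow> ereal \<Rightarrow> ereal" where
  "gFb eF b x = min (2 * x + ereal (real_of_int b)) (x + ereal (real_of_int (2 * eF)))"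

definition field_emb :: "('a::field \<Rightarrow> 'b::field) \<Rightarrow> bool" where
  "field_emb i \<longleftrightarrow> (\<forall>x y. i (x + y) = i x + i y) \<and> (\<forall>x y. i (x * y) = i x * i y) \<and> i 1 = 1"

definition quadratic_over :: "('a::field \<Rightarrow> 'b::field) \<Rightarrow> bool" where
  "quadratic_over i \<longleftrightarrow> (\<exists>t. \<forall>z. \<exists>!ab. z = i (fst ab) + i (snd ab) * t)"

end

theory Submission
  imports Defs
begin

text \<open>
  Up to square factors, \<open>\<kappa>\<close> either has odd valuation, or is \<open>1 + u\<close> with \<open>v\<^sub>F(u) \<ge> 2e\<^sub>F\<close>, or is
  \<open>1 + u\<close> with \<open>v\<^sub>F(u)\<close> odd and \<open>< 2e\<^sub>F\<close>, in which case \<open>def\<^sub>F(\<kappa>) = v\<^sub>F(u)\<close>.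
  Write \<open>\<pi>\<^sup>2 = t \<pi> - n\<close>; then \<open>v\<^sub>F(n) = 1\<close> and, as \<open>b\<close> is odd, \<open>2 v\<^sub>F(t) = b + 1\<close>.
  In the last case, successive approximation gives \<open>1 + u \<equiv> (1 + c)\<^sup>2 - n a\<^sup>2\<close>, the
  \<open>1\<close>-coordinate of \<open>(1 + c + a \<pi>)\<^sup>2\<close>, to high precision. So \<open>1 + u\<close> differs from a square of
  \<open>E\<close> essentially by the \<open>\<pi>\<close>-coordinate \<open>a (2 (1 + c) + a t) \<pi>\<close>, whose valuation is
  \<open>g(v\<^sub>F(u))\<close> unless the summands \<open>2 (1 + c)\<close> and \<open>a t\<close> have equal valuation, i.e. unless
  \<open>v\<^sub>F(u) = 2e\<^sub>F - b\<close>. If \<open>v\<^sub>F(u) \<ge> 2e\<^sub>F\<close>, Hensel's lemma bounds the defects in \<open>F\<close> and \<open>E\<close> by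
  \<open>2e\<^sub>F\<close> and \<open>2e\<^sub>E = 4e\<^sub>F\<close>, and these values are attained. If \<open>v\<^sub>F(\<kappa>)\<close> is odd, \<open>\<kappa>\<close> is a square
  times \<open>n\<close> times a unit, and \<open>n = \<pi> (t - \<pi>)\<close> turns this into a square times \<open>1 - t/\<pi>\<close> modulo
  \<open>\<pi>\<^bsup>b+1\<^esup>\<close>, so that \<open>def\<^sub>E(\<kappa>) = v\<^sub>E(t/\<pi>) = b\<close>.
\<close>

section \<open>Discrete valuations and the quadratic defect\<close>

abbreviation nonzero_square :: "'a::field \<Rightarrow> bool" where
  "nonzero_square x \<equiv> \<exists>c. c \<noteq> 0 \<and> x = c\<^sup>2"

lemma nonzero_square_mult_iff:
  fixes c x :: "'a::field"
  assumes "c \<noteq> 0"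
  shows "nonzero_square (c\<^sup>2 * x) \<longleftrightarrow> nonzero_square x"
proof
  assume "nonzero_square (c\<^sup>2 * x)"
  then obtain d where "d \<noteq> 0" "c\<^sup>2 * x = d\<^sup>2" by blast
  then show "nonzero_square x"
    using assms by (intro exI[of _ "d / c"]) (auto simp: power_divide field_simps)
next
  assume "nonzero_square x"
  then obtain d where "d \<noteq> 0" "x = d\<^sup>2" by blast
  then show "nonzero_square (c\<^sup>2 * x)"
    using assms by (intro exI[of _ "c * d"]) (auto simp: power_mult_distrib)
qed

lemma square_mult_ne_one:
  fixes x y :: "'a::field"
  assumes "\<not> nonzero_square x" "y \<noteq> 0"
  shows "y\<^sup>2 * x - 1 \<noteq> 0"
proof
  assume "y\<^sup>2 * x - 1 = 0"
  then have "x = (inverse y)\<^sup>2" using assms(2) by (simp add: power_inverse field_simps)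
  moreover have "inverse y \<noteq> 0" using assms(2) by simp
  ultimately show False using assms(1) by blast
qed

locale normalized_valuation =
  fixes v :: "'a::field_char_0 \<Rightarrow> int"
  assumes normalized: "normalized_dval v"
begin

text \<open>\<open>val_ge x m\<close> means \<open>v x \<ge> m\<close> under the convention \<open>v 0 = \<infinity>\<close>; the value \<open>v 0\<close> itself is junk.\<close>
definition val_ge :: "'a \<Rightarrow> int \<Rightarrow> bool" where
  "val_ge x m \<longleftrightarrow> x = 0 \<or> m \<le> v x"

lemma val_mult: "x \<noteq> 0 \<Longrightarrow> y \<noteq> 0 \<Longrightarrow> v (x * y) = v x + v y"
  using normalized unfolding normalized_dval_def by blast

lemma val_add_ge_min: "x \<noteq> 0 \<Longrightarrow> y \<noteq> 0 \<Longrightarrow> x + y \<noteq> 0 \<Longrightarrow> min (v x) (v y) \<le> v (x + y)"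
  using normalized unfolding normalized_dval_def by blast

lemma ex_uniformizer: "\<exists>p. p \<noteq> 0 \<and> v p = 1"
  using normalized unfolding normalized_dval_def by blast

lemma val_one [simp]: "v 1 = 0"
  using val_mult[of 1 1] by simp

lemma val_minus [simp]: "v (- x) = v x"
proof (cases "x = 0")
  case False
  have "v (-1) = 0" using val_mult[of "-1" "-1"] by simp
  then show ?thesis using val_mult[of "-1" x] False by simp
qed simp

lemma val_inverse: "x \<noteq> 0 \<Longrightarrow> v (inverse x) = - v x"
  using val_mult[of x "inverse x"] by simp

lemma val_divide: "x \<noteq> 0 \<Longrightarrow> y \<noteq> 0 \<Longrightarrow> v (x / y) = v x - v y"
  using val_mult[of x "inverse y"] val_inverse[of y] by (simp add: divide_inverse)

lemma val_power: "x \<noteq> 0 \<Longrightarrow> v (x ^ n) = int n * v x"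
  by (induction n) (auto simp: val_mult algebra_simps)

lemma val_square: "x \<noteq> 0 \<Longrightarrow> v (x\<^sup>2) = 2 * v x"
  using val_power[of x 2] by simp

lemma ex_val: "\<exists>z. z \<noteq> 0 \<and> v z = j"
proof -
  obtain p where p: "p \<noteq> 0" "v p = 1" using ex_uniformizer by blast
  show ?thesis
  proof (cases "0 \<le> j")
    case True
    then show ?thesis using p val_power[of p "nat j"] by (intro exI[of _ "p ^ nat j"]) auto
  next
    case False
    then show ?thesis using p val_power[of "inverse p" "nat (- j)"] val_inverse[of p]
      by (intro exI[of _ "inverse p ^ nat (- j)"]) auto
  qed
qed

lemma val_add_of_less:
  assumes "x \<noteq> 0" "y \<noteq> 0" "v x < v y"
  shows "x + y \<noteq> 0" "v (x + y) = v x"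
proof -
  show nz: "x + y \<noteq> 0"
  proof
    assume "x + y = 0"
    then have "y = - x" by (simp add: add_eq_0_iff)
    then show False using assms by simp
  qed
  have "v x \<le> v (x + y)" using val_add_ge_min[of x y] assms nz by simp
  moreover have "min (v (x + y)) (v y) \<le> v x"
    using val_add_ge_min[of "x + y" "- y"] nz assms by simp
  ultimately show "v (x + y) = v x" using assms by linarith
qed

lemma val_ge_0 [simp]: "val_ge 0 m"
  by (simp add: val_ge_def)

lemma val_ge_val: "val_ge x (v x)"
  by (simp add: val_ge_def)

lemma val_ge_mono: "val_ge x m \<Longrightarrow> n \<le> m \<Longrightarrow> val_ge x n"
  by (auto simp: val_ge_def)

lemma val_ge_minus [simp]: "val_ge (- x) m = val_ge x m"
  by (auto simp: val_ge_def)

lemma val_ge_diff_commute: "val_ge (y - x) m = val_ge (x - y) m"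
  using val_ge_minus[of "x - y" m] by simp

lemma val_ge_add: "val_ge x m \<Longrightarrow> val_ge y m \<Longrightarrow> val_ge (x + y) m"
  using val_add_ge_min[of x y] by (cases "x = 0 \<or> y = 0 \<or> x + y = 0") (auto simp: val_ge_def)

lemma val_ge_diff: "val_ge x m \<Longrightarrow> val_ge y m \<Longrightarrow> val_ge (x - y) m"
  using val_ge_add[of x m "- y"] by simp

lemma val_ge_mult: "val_ge x m \<Longrightarrow> val_ge y n \<Longrightarrow> val_ge (x * y) (m + n)"
  by (cases "x = 0 \<or> y = 0") (auto simp: val_ge_def val_mult)

lemma val_ge_divide: "y \<noteq> 0 \<Longrightarrow> val_ge x m \<Longrightarrow> val_ge (x / y) (m - v y)"
  by (cases "x = 0") (auto simp: val_ge_def val_divide)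

lemma val_ge_two: "val_ge 2 0"
  using val_ge_add[of 1 0 1] by (simp add: val_ge_def)

lemma val_add_of_val_ge:
  assumes "x \<noteq> 0" "val_ge y (v x + 1)"
  shows "x + y \<noteq> 0" "v (x + y) = v x"
  using assms val_add_of_less[of x y] by (cases "y = 0"; auto simp: val_ge_def)+

lemma val_one_plus: "val_ge z 1 \<Longrightarrow> 1 + z \<noteq> 0 \<and> v (1 + z) = 0"
  using val_add_of_val_ge[of 1 z] by simp

lemma val_add_of_val_ne:
  assumes "x \<noteq> 0" "y \<noteq> 0" "v x \<noteq> v y"
  shows "x + y \<noteq> 0" "v (x + y) = min (v x) (v y)"
  using assms val_add_of_less[of x y] val_add_of_less[of y x]
  by (cases "v x < v y"; simp add: add.commute min_def)+

lemma qdef_square_mult: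
  assumes c: "c \<noteq> 0" and x: "x \<noteq> 0"
  shows "qdef v (c\<^sup>2 * x) = qdef v x"
proof -
  have parity: "odd (v (c\<^sup>2 * x)) \<longleftrightarrow> odd (v x)"
    using val_mult[of "c\<^sup>2" x] val_square[of c] c x by simp
  have "{ereal (v (d\<^sup>2 * (c\<^sup>2 * x) - 1)) | d. d \<noteq> 0} = {ereal (v (d\<^sup>2 * x - 1)) | d. d \<noteq> 0}"
  proof (intro equalityI subsetI)
    fix r assume "r \<in> {ereal (v (d\<^sup>2 * (c\<^sup>2 * x) - 1)) | d. d \<noteq> 0}"
    then obtain d where "d \<noteq> 0" "r = ereal (v (d\<^sup>2 * (c\<^sup>2 * x) - 1))" by blast
    then show "r \<in> {ereal (v (d\<^sup>2 * x - 1)) | d. d \<noteq> 0}"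
      using c by (intro CollectI exI[of _ "d * c"]) (auto simp: power_mult_distrib mult.assoc)
  next
    fix r assume "r \<in> {ereal (v (d\<^sup>2 * x - 1)) | d. d \<noteq> 0}"
    then obtain d where "d \<noteq> 0" "r = ereal (v (d\<^sup>2 * x - 1))" by blast
    then show "r \<in> {ereal (v (d\<^sup>2 * (c\<^sup>2 * x) - 1)) | d. d \<noteq> 0}"
      using c by (intro CollectI exI[of _ "d / c"]) (auto simp: power_divide field_simps)
  qed
  then show ?thesis
    unfolding qdef_def using nonzero_square_mult_iff[OF c, of x] parity
    by (simp only: mult.assoc[symmetric])
qed

lemma qdef_ge:
  assumes ns: "\<not> nonzero_square x" and ev: "even (v x)"
    and y: "y \<noteq> 0" and m: "val_ge (y\<^sup>2 * x - 1) m"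
  shows "ereal m \<le> qdef v x"
proof -
  have "ereal m \<le> ereal (v (y\<^sup>2 * x - 1))"
    using m square_mult_ne_one[OF ns y] by (simp add: val_ge_def)
  also have "\<dots> \<le> Sup {ereal (v (d\<^sup>2 * x - 1)) | d. d \<noteq> 0}"
    using y by (intro Sup_upper) blast
  finally show ?thesis using ns ev unfolding qdef_def by simp
qed

lemma qdef_le:
  assumes ns: "\<not> nonzero_square x" and ev: "even (v x)"
    and bound: "\<And>y. y \<noteq> 0 \<Longrightarrow> v (y\<^sup>2 * x - 1) \<le> m"
  shows "qdef v x \<le> ereal m"
proof -
  have "Sup {ereal (v (d\<^sup>2 * x - 1)) | d. d \<noteq> 0} \<le> ereal m"
    using bound by (intro Sup_least) auto
  then show ?thesis using ns ev unfolding qdef_def by simp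
qed

definition odd_val_below_2e :: "'a \<Rightarrow> bool" where
  "odd_val_below_2e u \<longleftrightarrow> u \<noteq> 0 \<and> odd (v u) \<and> 0 < v u \<and> v u < 2 * v 2"

lemma odd_val_below_2eE:
  assumes "odd_val_below_2e u"
  obtains k where "u \<noteq> 0" "v u = 2 * k + 1" "0 \<le> k" "k < v 2"
proof -
  have u: "u \<noteq> 0" "odd (v u)" "0 < v u" "v u < 2 * v 2"
    using assms unfolding odd_val_below_2e_def by auto
  from u(2) obtain k where k: "v u = 2 * k + 1" by (rule oddE)
  moreover have "0 \<le> k" "k < v 2" using u(3,4) k by linarith+
  ultimately show thesis using that u(1) by blast
qed

lemma val_deviation_le_odd:
  assumes u: "odd_val_below_2e u" and y: "y \<noteq> 0"
  shows "v (y\<^sup>2 * (1 + u) - 1) \<le> v u"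
proof (rule ccontr)
  define w where "w = y\<^sup>2 * (1 + u) - 1"
  define m where "m = v u"
  have u0: "u \<noteq> 0" and m: "odd m" "0 < m" "m < 2 * v 2"
    using u unfolding odd_val_below_2e_def m_def by auto
  assume "\<not> v (y\<^sup>2 * (1 + u) - 1) \<le> v u"
  then have w: "val_ge w (m + 1)" unfolding w_def m_def by (simp add: val_ge_def)
  have "v (1 + u) = 0" using val_one_plus[of u] m u0 by (simp add: val_ge_def m_def)
  moreover have "y\<^sup>2 * (1 + u) = 1 + w" by (simp add: w_def)
  moreover have "1 + u \<noteq> 0" using val_one_plus[of u] m u0 by (simp add: val_ge_def m_def)
  moreover have "1 + w \<noteq> 0 \<and> v (1 + w) = 0" using val_one_plus[of w] w m val_ge_mono by simp
  ultimately have vy: "v y = 0" using val_mult[of "y\<^sup>2" "1 + u"] val_square[of y] y by auto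
  have "- (y\<^sup>2 * u) \<noteq> 0" "v (- (y\<^sup>2 * u)) = m"
    using val_mult[of "y\<^sup>2" u] val_square[of y] vy y u0 m_def by simp_all
  moreover have "y\<^sup>2 - 1 = - (y\<^sup>2 * u) + w" unfolding w_def by (simp add: algebra_simps)
  ultimately have "y\<^sup>2 - 1 \<noteq> 0" "v (y\<^sup>2 - 1) = m"
    using val_add_of_val_ge[of "- (y\<^sup>2 * u)" w] w by auto
  moreover define z where "z = y - 1"
  moreover have "y\<^sup>2 - 1 = z * (z + 2)" unfolding z_def by (simp add: algebra_simps power2_eq_square)
  ultimately have z: "z \<noteq> 0" "z + 2 \<noteq> 0" and vz: "v z + v (z + 2) = m"
    using val_mult[of z "z + 2"] by auto
  \<comment> \<open>\<open>v (z (z + 2))\<close> is \<open>2 v z\<close> if \<open>v z < v 2\<close> and at least \<open>2 v 2\<close> otherwise, never odd \<open>< 2 v 2\<close>\<close>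
  show False
  proof (cases "v z < v 2")
    case True
    then have "v (z + 2) = v z" using val_add_of_less[of z 2] z by simp
    then show ?thesis using vz m by presburger
  next
    case False
    have "val_ge (z + 2) (v 2)" using False by (intro val_ge_add) (auto simp: val_ge_def)
    then show ?thesis using vz m z False by (simp add: val_ge_def)
  qed
qed

lemma qdef_eq_odd_deviation:
  assumes u: "odd_val_below_2e (x - 1)" and ns: "\<not> nonzero_square x"
  shows "qdef v x = v (x - 1)"
proof -
  have "v x = 0" using val_one_plus[of "x - 1"] u by (simp add: odd_val_below_2e_def val_ge_def)
  moreover have "ereal (v (x - 1)) \<le> qdef v x"
    using qdef_ge[OF ns, of 1 "v (x - 1)"] calculation by (simp add: val_ge_val)
  moreover have "qdef v x \<le> ereal (v (x - 1))"
    using qdef_le[OF ns] val_deviation_le_odd[OF u] calculation by simp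
  ultimately show ?thesis by simp
qed

lemma ex_residue_cover:
  assumes "finite_residue_field v"
  obtains R where "finite R" "\<And>r. r \<in> R \<Longrightarrow> val_ge r 0"
    "\<And>x. val_ge x 0 \<Longrightarrow> \<exists>r\<in>R. val_ge (x - r) 1"
proof -
  obtain R where R: "finite R" "\<And>x. x = 0 \<or> 0 \<le> v x \<Longrightarrow> \<exists>r\<in>R. x = r \<or> 0 < v (x - r)"
    using assms unfolding finite_residue_field_def by blast
  have "\<exists>r\<in>{r \<in> R. val_ge r 0}. val_ge (x - r) 1" if x: "val_ge x 0" for x
  proof -
    obtain r where r: "r \<in> R" "val_ge (x - r) 1"
      using R(2)[of x] x by (auto simp: val_ge_def)
    moreover have "r = x - (x - r)" by simp
    then have "val_ge r 0" using val_ge_diff[OF x val_ge_mono[OF r(2)]] by simp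
    ultimately show ?thesis by auto
  qed
  then show ?thesis by (intro that[of "{r \<in> R. val_ge r 0}"]) (simp_all add: R(1))
qed

lemma ex_residue_representatives:
  assumes "finite_residue_field v"
  obtains S where "finite S" "\<And>r. r \<in> S \<Longrightarrow> val_ge r 0"
    "\<And>x. val_ge x 0 \<Longrightarrow> \<exists>r\<in>S. val_ge (x - r) 1"
    "\<And>r r'. r \<in> S \<Longrightarrow> r' \<in> S \<Longrightarrow> val_ge (r - r') 1 \<Longrightarrow> r = r'"
proof -
  obtain R where R: "finite R" "\<And>r. r \<in> R \<Longrightarrow> val_ge r 0"
    and cover: "\<And>x. val_ge x 0 \<Longrightarrow> \<exists>r\<in>R. val_ge (x - r) 1"
    by (rule ex_residue_cover[OF assms]) blast
  \<comment> \<open>the choice depends only on the set of elements of \<open>R\<close> congruent to \<open>x\<close>, hence only on the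
    residue class of \<open>x\<close>\<close>
  define rep where "rep x = (SOME r. r \<in> {r \<in> R. val_ge (x - r) 1})" for x
  have rep: "rep x \<in> R \<and> val_ge (x - rep x) 1" if "val_ge x 0" for x
  proof -
    have "\<exists>r. r \<in> {r \<in> R. val_ge (x - r) 1}" using cover[OF that] by blast
    then have "(SOME r. r \<in> {r \<in> R. val_ge (x - r) 1}) \<in> {r \<in> R. val_ge (x - r) 1}"
      by (rule someI_ex)
    then show ?thesis unfolding rep_def by simp
  qed
  have rep_cong: "rep x = rep y" if "val_ge (x - y) 1" for x y
  proof -
    have "val_ge (x - r) 1 \<longleftrightarrow> val_ge (y - r) 1" for r
      using val_ge_add[OF that, of "y - r"] val_ge_diff[OF _ that, of "x - r"] by auto
    then show ?thesis unfolding rep_def by simp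
  qed
  have rep_idem: "rep r = r" if r: "r \<in> rep ` R" for r
  proof -
    obtain x where "x \<in> R" "r = rep x" using r by blast
    then show ?thesis using rep_cong[of x "rep x"] rep R(2) by simp
  qed
  show ?thesis
  proof
    show "finite (rep ` R)" using R(1) by simp
    show "val_ge r 0" if "r \<in> rep ` R" for r
      using that rep R(2) by auto
    show "\<exists>r\<in>rep ` R. val_ge (x - r) 1" if x: "val_ge x 0" for x
    proof -
      obtain r where r: "r \<in> R" "val_ge (x - r) 1" using cover[OF x] by blast
      have "val_ge (x - rep r) 1"
        using val_ge_add[OF r(2), of "r - rep r"] rep[OF R(2)[OF r(1)]] by simp
      then show ?thesis using r(1) by auto
    qed
    show "r = r'" if "r \<in> rep ` R" "r' \<in> rep ` R" "val_ge (r - r') 1" for r r'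
      using rep_idem rep_cong that by metis
  qed
qed

lemma cauchy_of_increments:
  assumes inc: "\<And>n. val_ge (h (Suc n) - h n) (int n + 1)"
  shows "\<forall>N::int. \<exists>M. \<forall>m\<ge>M. \<forall>n\<ge>M. h m = h n \<or> N \<le> v (h m - h n)"
proof (intro allI)
  have far: "val_ge (h n - h M) (int M + 1)" if "M \<le> n" for M n
    using that
  proof (induction n rule: dec_induct)
    case (step n)
    have "val_ge (h (Suc n) - h n) (int M + 1)" using val_ge_mono[OF inc[of n]] step(1) by simp
    from val_ge_add[OF this step(3)] show ?case by simp
  qed simp
  fix N :: int
  show "\<exists>M. \<forall>m\<ge>M. \<forall>n\<ge>M. h m = h n \<or> N \<le> v (h m - h n)"
  proof (intro exI[of _ "nat N"] allI impI)
    fix m n assume mn: "nat N \<le> m" "nat N \<le> n"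
    have "val_ge ((h m - h (nat N)) - (h n - h (nat N))) (int (nat N) + 1)"
      using far[OF mn(1)] far[OF mn(2)] by (rule val_ge_diff)
    then have "val_ge (h m - h n) (int (nat N) + 1)" by simp
    then have "val_ge (h m - h n) N" by (rule val_ge_mono) simp
    then show "h m = h n \<or> N \<le> v (h m - h n)" by (auto simp: val_ge_def)
  qed
qed


lemma limit_of_square_iteration:
  assumes hS: "\<And>n. h (Suc n) = \<rho> - (h n)\<^sup>2" and h_pos: "\<And>n. val_ge (h n) 1"
    and L: "\<forall>N::int. \<exists>M. \<forall>n\<ge>M. h n = L \<or> N \<le> v (h n - L)"
  shows "L\<^sup>2 + L = \<rho>"
proof (rule ccontr)
  define D where "D = L\<^sup>2 + L - \<rho>"
  assume "L\<^sup>2 + L \<noteq> \<rho>"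
  then have D: "D \<noteq> 0" unfolding D_def by simp
  define N where "N = max (v D + 1) 1"
  obtain M where "\<forall>n\<ge>M. h n = L \<or> N \<le> v (h n - L)" using L by blast
  then have close: "val_ge (L - h n) N" if "M \<le> n" for n
    using that val_ge_diff_commute[of L "h n"] by (auto simp: val_ge_def)
  have "val_ge (L - h M) 0" by (rule val_ge_mono[OF close[of M]]) (simp_all add: N_def)
  moreover have "val_ge (2 * h M) 0"
    using val_ge_mult[OF val_ge_two h_pos[of M]] by (rule val_ge_mono) simp
  ultimately have "val_ge ((L - h M) + 2 * h M) 0" by (rule val_ge_add)
  moreover have "(L - h M) + 2 * h M = L + h M" by simp
  ultimately have "val_ge (L + h M) 0" by simp
  with close[of M] have "val_ge ((L - h M) * (L + h M)) (N + 0)"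
    by (intro val_ge_mult) simp_all
  then have "val_ge ((L - h (Suc M)) + (L - h M) * (L + h M)) N"
    using close[of "Suc M"] by (intro val_ge_add) simp_all
  moreover have "D = (L - h (Suc M)) + (L - h M) * (L + h M)"
    unfolding D_def hS by (simp add: power2_eq_square algebra_simps)
  ultimately show False using D N_def by (simp add: val_ge_def)
qed
end

section \<open>Dyadic local fields\<close>

locale dyadic_valuation = normalized_valuation +
  assumes finite_residue: "finite_residue_field v"
    and two_pos: "0 < v 2"
begin

lemma val_ge_two_mult: "val_ge x m \<Longrightarrow> val_ge (2 * x) (v 2 + m)"
  using val_ge_mult[OF val_ge_val[of 2]] by blast

lemma square_cong_cancel:
  assumes a: "val_ge a 0" and b: "val_ge b 0" and ab: "val_ge (a\<^sup>2 - b\<^sup>2) 1"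
  shows "val_ge (a - b) 1"
proof -
  have "(a - b)\<^sup>2 = (a\<^sup>2 - b\<^sup>2) - 2 * (b * (a - b))" by (simp add: power2_eq_square algebra_simps)
  moreover have "val_ge (2 * (b * (a - b))) (v 2 + (0 + 0))"
    by (intro val_ge_two_mult val_ge_mult b val_ge_diff a)
  then have "val_ge (2 * (b * (a - b))) 1" using two_pos by (auto intro: val_ge_mono)
  ultimately have "val_ge ((a - b)\<^sup>2) 1" using ab by (simp add: val_ge_diff)
  then show ?thesis by (cases "a - b = 0") (auto simp: val_ge_def val_square)
qed

text \<open>The residue field is finite of characteristic 2, so squaring is injective on it and hence
  surjective.\<close>
lemma ex_unit_square_congruent:
  assumes x: "x \<noteq> 0" "v x = 0"
  obtains y where "y \<noteq> 0" "v y = 0" "val_ge (x - y\<^sup>2) 1"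
proof -
  obtain S where S_fin: "finite S" and S_int: "\<And>r. r \<in> S \<Longrightarrow> val_ge r 0"
      and S_cover: "\<And>x. val_ge x 0 \<Longrightarrow> \<exists>r\<in>S. val_ge (x - r) 1"
      and S_distinct: "\<And>r r'. r \<in> S \<Longrightarrow> r' \<in> S \<Longrightarrow> val_ge (r - r') 1 \<Longrightarrow> r = r'"
    by (rule ex_residue_representatives[OF finite_residue]) blast
  define sq where "sq r = (SOME q. q \<in> S \<and> val_ge (r\<^sup>2 - q) 1)" for r
  have sq: "sq r \<in> S \<and> val_ge (r\<^sup>2 - sq r) 1" if r: "r \<in> S" for r
  proof -
    have "val_ge (r\<^sup>2) 0" using val_ge_mult[OF S_int[OF r] S_int[OF r]] by (simp add: power2_eq_square)
    then have "\<exists>q. q \<in> S \<and> val_ge (r\<^sup>2 - q) 1" using S_cover by blast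
    then show ?thesis unfolding sq_def by (rule someI_ex)
  qed
  have "inj_on sq S"
  proof (rule inj_onI)
    fix r r' assume r: "r \<in> S" "r' \<in> S" "sq r = sq r'"
    have "val_ge ((r\<^sup>2 - sq r) - (r'\<^sup>2 - sq r')) 1"
      using val_ge_diff sq[OF r(1)] sq[OF r(2)] by blast
    then have "val_ge (r\<^sup>2 - r'\<^sup>2) 1" using r(3) by simp
    then show "r = r'" using S_distinct[OF r(1,2)] square_cong_cancel S_int[OF r(1)] S_int[OF r(2)]
      by blast
  qed
  then have "sq ` S = S" using endo_inj_surj[OF S_fin] sq by blast
  moreover obtain q where q: "q \<in> S" "val_ge (x - q) 1"
    using S_cover[of x] x by (auto simp: val_ge_def)
  ultimately obtain r where r: "r \<in> S" "q = sq r" by (metis imageE)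
  have "val_ge ((x - q) - (r\<^sup>2 - sq r)) 1" using val_ge_diff[OF q(2)] sq[OF r(1)] by blast
  then have xr: "val_ge (x - r\<^sup>2) 1" using r by simp
  have "r\<^sup>2 = x + - (x - r\<^sup>2)" by simp
  then have "r\<^sup>2 \<noteq> 0" "v (r\<^sup>2) = 0"
    using val_add_of_val_ge[of x "- (x - r\<^sup>2)"] x xr val_ge_diff_commute by auto
  then show ?thesis using that[of r] xr val_square[of r] by auto
qed

lemma ex_square_approx_even:
  assumes x: "x \<noteq> 0" "v x = 2 * h"
  obtains y where "y \<noteq> 0" "v y = h" "val_ge (x - y\<^sup>2) (2 * h + 1)"
proof -
  obtain z where z: "z \<noteq> 0" "v z = h" using ex_val by blast
  have "x / z\<^sup>2 \<noteq> 0" "v (x / z\<^sup>2) = 0" using x z val_divide[of x "z\<^sup>2"] val_square by auto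
  then obtain \<gamma> where \<gamma>: "\<gamma> \<noteq> 0" "v \<gamma> = 0" "val_ge (x / z\<^sup>2 - \<gamma>\<^sup>2) 1"
    using ex_unit_square_congruent by blast
  have "x - (z * \<gamma>)\<^sup>2 = z\<^sup>2 * (x / z\<^sup>2 - \<gamma>\<^sup>2)" using z by (simp add: field_simps power_mult_distrib)
  moreover have "val_ge (z\<^sup>2 * (x / z\<^sup>2 - \<gamma>\<^sup>2)) (2 * h + 1)"
    using val_ge_mult[OF val_ge_val[of "z\<^sup>2"] \<gamma>(3)] val_square z by simp
  ultimately show ?thesis using that[of "z * \<gamma>"] z \<gamma> val_mult by simp
qed

lemma ex_square_approx_odd:
  assumes p: "p \<noteq> 0" "v p = 1" and x: "x \<noteq> 0" "v x = 2 * h + 1"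
  obtains y where "y \<noteq> 0" "v y = h" "val_ge (x + p * y\<^sup>2) (2 * h + 2)"
proof -
  have "- x / p \<noteq> 0" "v (- x / p) = 2 * h" using p x val_divide[of "- x" p] by auto
  then obtain y where y: "y \<noteq> 0" "v y = h" "val_ge (- x / p - y\<^sup>2) (2 * h + 1)"
    using ex_square_approx_even by blast
  have "x + p * y\<^sup>2 = - (p * (- x / p - y\<^sup>2))" using p by (simp add: field_simps)
  moreover have "val_ge (p * (- x / p - y\<^sup>2)) (1 + (2 * h + 1))"
    using val_ge_mult[OF val_ge_val[of p] y(3)] p by simp
  ultimately have "val_ge (x + p * y\<^sup>2) (2 * h + 2)" by (simp add: add.commute)
  then show ?thesis using that y by blast
qed

lemma ex_square_mult_near_one:
  assumes x: "x \<noteq> 0" "even (v x)"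
  obtains C where "C \<noteq> 0" "val_ge (C\<^sup>2 * x - 1) 1"
proof -
  obtain h where "v x = 2 * h" using x(2) by (metis evenE)
  then obtain y where y: "y \<noteq> 0" "v y = h" "val_ge (x - y\<^sup>2) (2 * h + 1)"
    using ex_square_approx_even x(1) by blast
  have "(inverse y)\<^sup>2 * x - 1 = (x - y\<^sup>2) / y\<^sup>2"
    using y(1) by (simp add: field_simps)
  moreover have "val_ge ((x - y\<^sup>2) / y\<^sup>2) 1"
    using val_ge_divide[OF _ y(3), of "y\<^sup>2"] val_square y by simp
  ultimately show ?thesis using that[of "inverse y"] y(1) by simp
qed

lemma raise_even_deviation:
  assumes x: "x - 1 \<noteq> 0" "v (x - 1) = 2 * h" and h: "0 < h" "h < v 2"
  obtains Y where "Y \<noteq> 0" "val_ge (Y\<^sup>2 * x - 1) (2 * h + 1)"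
proof -
  obtain c where c: "c \<noteq> 0" "v c = h" "val_ge (x - 1 - c\<^sup>2) (2 * h + 1)"
    using ex_square_approx_even x by blast
  have Y: "1 + c \<noteq> 0" "v (1 + c) = 0" using val_one_plus[of c] c h by (simp_all add: val_ge_def)
  have "val_ge (2 * c) (v 2 + h)" using val_ge_two_mult[OF val_ge_val[of c]] c by simp
  then have "val_ge (2 * c) (2 * h + 1)" by (rule val_ge_mono) (use h in simp)
  with c(3) have "val_ge (x - 1 - c\<^sup>2 - 2 * c) (2 * h + 1)" by (rule val_ge_diff)
  moreover have "(inverse (1 + c))\<^sup>2 * x - 1 = (x - (1 + c)\<^sup>2) / (1 + c)\<^sup>2"
    using Y by (simp add: field_simps)
  moreover have "x - (1 + c)\<^sup>2 = x - 1 - c\<^sup>2 - 2 * c" by (simp add: power2_eq_square algebra_simps)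
  ultimately show ?thesis
    using that[of "inverse (1 + c)"] Y val_ge_divide[of "(1 + c)\<^sup>2"] val_square by simp
qed

lemma ex_square_mult_normal_form:
  assumes x: "x \<noteq> 0" "even (v x)"
  obtains C where "C \<noteq> 0" "val_ge (C\<^sup>2 * x - 1) (2 * v 2) \<or> odd_val_below_2e (C\<^sup>2 * x - 1)"
proof -
  have "m \<le> 2 * v 2 \<Longrightarrow> \<exists>C. C \<noteq> 0 \<and> (val_ge (C\<^sup>2 * x - 1) m \<or> odd_val_below_2e (C\<^sup>2 * x - 1))"
    if "1 \<le> m" for m
    using that
  proof (induction m rule: int_ge_induct[consumes 1])
    case base
    obtain C where "C \<noteq> 0" "val_ge (C\<^sup>2 * x - 1) 1" using ex_square_mult_near_one[OF x] .
    then show ?case by blast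
  next
    case (step m)
    then obtain C where C: "C \<noteq> 0" "val_ge (C\<^sup>2 * x - 1) m \<or> odd_val_below_2e (C\<^sup>2 * x - 1)"
      by force
    show ?case
    proof (cases "val_ge (C\<^sup>2 * x - 1) (m + 1) \<or> odd_val_below_2e (C\<^sup>2 * x - 1)")
      case True
      then show ?thesis using C(1) by blast
    next
      case False
      then have u: "C\<^sup>2 * x - 1 \<noteq> 0" "v (C\<^sup>2 * x - 1) = m" using C(2) by (auto simp: val_ge_def)
      then have "even m" using False step.hyps step.prems unfolding odd_val_below_2e_def by auto
      then obtain h where h: "m = 2 * h" by (metis evenE)
      then obtain Y where "Y \<noteq> 0" "val_ge (Y\<^sup>2 * (C\<^sup>2 * x) - 1) (m + 1)"
        using raise_even_deviation[of "C\<^sup>2 * x" h] u step.hyps step.prems by auto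
      then show ?thesis using C(1)
        by (intro exI[of _ "Y * C"]) (simp add: power_mult_distrib mult.assoc)
    qed
  qed
  from this[of "2 * v 2"] two_pos show ?thesis using that by auto
qed

lemma approx_norm_form_step:
  assumes p: "p \<noteq> 0" "v p = 1" and a: "a \<noteq> 0" "v a = k" "0 \<le> k" and c: "val_ge c 1"
    and P: "1 + u - ((1 + c)\<^sup>2 - p * a\<^sup>2) \<noteq> 0" "v (1 + u - ((1 + c)\<^sup>2 - p * a\<^sup>2)) = m"
    and m: "2 * k + 2 \<le> m" "m \<le> v 2 + k"
  obtains a' c' where "a' \<noteq> 0" "v a' = k" "val_ge c' 1"
    "val_ge (1 + u - ((1 + c')\<^sup>2 - p * a'\<^sup>2)) (m + 1)"
proof (cases "even m")
  define P where "P = 1 + u - ((1 + c)\<^sup>2 - p * a\<^sup>2)"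
  case True
  then obtain h where h: "m = 2 * h" by (rule evenE)
  obtain c' where c': "c' \<noteq> 0" "v c' = h" "val_ge (P - c'\<^sup>2) (2 * h + 1)"
    using ex_square_approx_even P h unfolding P_def by blast
  have "val_ge (1 + c) 0" using val_one_plus[OF c] by (simp add: val_ge_def)
  then have "val_ge (2 * (c' * (1 + c))) (v 2 + (h + 0))"
    by (intro val_ge_two_mult val_ge_mult) (use c' in \<open>simp add: val_ge_def\<close>)
  then have "val_ge (2 * (c' * (1 + c))) (2 * h + 1)" by (rule val_ge_mono) (use m h in simp)
  with c'(3) have "val_ge ((P - c'\<^sup>2) - 2 * (c' * (1 + c))) (m + 1)"
    unfolding h by (rule val_ge_diff)
  moreover have "(P - c'\<^sup>2) - 2 * (c' * (1 + c)) = 1 + u - ((1 + (c + c'))\<^sup>2 - p * a\<^sup>2)"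
    unfolding P_def by (simp add: power2_eq_square algebra_simps)
  moreover have "val_ge (c + c') 1" using c c' m h a(3) by (intro val_ge_add) (auto simp: val_ge_def)
  ultimately show ?thesis using that[of a "c + c'"] a by simp
next
  define P where "P = 1 + u - ((1 + c)\<^sup>2 - p * a\<^sup>2)"
  case False
  then obtain h where h: "m = 2 * h + 1" by (rule oddE)
  obtain y where y: "y \<noteq> 0" "v y = h" "val_ge (P + p * y\<^sup>2) (2 * h + 2)"
    using ex_square_approx_odd[OF p] P h unfolding P_def by blast
  have "val_ge (2 * (p * a * y)) (v 2 + (1 + k + h))"
    using a p y by (intro val_ge_two_mult val_ge_mult) (simp_all add: val_ge_def)
  then have "val_ge (2 * (p * a * y)) (2 * h + 2)" by (rule val_ge_mono) (use m h a(3) in simp)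
  with y(3) have "val_ge ((P + p * y\<^sup>2) + 2 * (p * a * y)) (2 * h + 2)" by (rule val_ge_add)
  moreover have "(P + p * y\<^sup>2) + 2 * (p * a * y) = 1 + u - ((1 + c)\<^sup>2 - p * (a + y)\<^sup>2)"
    unfolding P_def by (simp add: power2_eq_square algebra_simps)
  moreover have "a + y \<noteq> 0" "v (a + y) = k"
    using val_add_of_val_ge[of a y] a y m h by (simp_all add: val_ge_def)
  ultimately show ?thesis using that[of "a + y" c] c h by (simp add: add.commute)
qed

text \<open>Successive corrections of \<open>c\<close> and \<open>a\<close>, as in Hensel's lemma; the cross terms \<open>2 c' (1 + c)\<close>
  and \<open>2 p a a'\<close> that the corrections introduce stay negligible up to precision \<open>v 2 + k + 1\<close>.\<close>
lemma approx_norm_form: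
  assumes p: "p \<noteq> 0" "v p = 1" and u: "u \<noteq> 0" "v u = 2 * k + 1" and k: "0 \<le> k" "k < v 2"
  obtains a c where "a \<noteq> 0" "v a = k" "val_ge c 1"
    "val_ge (1 + u - ((1 + c)\<^sup>2 - p * a\<^sup>2)) (v 2 + k + 1)"
proof -
  have "m \<le> v 2 + k + 1 \<Longrightarrow>
      \<exists>a c. a \<noteq> 0 \<and> v a = k \<and> val_ge c 1 \<and> val_ge (1 + u - ((1 + c)\<^sup>2 - p * a\<^sup>2)) m"
    if "2 * k + 2 \<le> m" for m
    using that
  proof (induction m rule: int_ge_induct[consumes 1])
    case base
    obtain a where "a \<noteq> 0" "v a = k" "val_ge (u + p * a\<^sup>2) (2 * k + 2)"
      using ex_square_approx_odd[OF p u] .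
    then show ?case by (intro exI[of _ a] exI[of _ 0]) simp
  next
    case (step m)
    then obtain a c where a: "a \<noteq> 0" "v a = k" and c: "val_ge c 1"
        and P: "val_ge (1 + u - ((1 + c)\<^sup>2 - p * a\<^sup>2)) m"
      by force
    show ?case
    proof (cases "val_ge (1 + u - ((1 + c)\<^sup>2 - p * a\<^sup>2)) (m + 1)")
      case True
      then show ?thesis using a c by blast
    next
      case False
      then have P': "1 + u - ((1 + c)\<^sup>2 - p * a\<^sup>2) \<noteq> 0" "v (1 + u - ((1 + c)\<^sup>2 - p * a\<^sup>2)) = m"
        using P by (auto simp: val_ge_def)
      have "m \<le> v 2 + k" using step.prems by simp
      obtain a' c' where "a' \<noteq> 0" "v a' = k" "val_ge c' 1"
          "val_ge (1 + u - ((1 + c')\<^sup>2 - p * a'\<^sup>2)) (m + 1)"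
        using approx_norm_form_step[OF p a k(1) c P' step.hyps \<open>m \<le> v 2 + k\<close>] by blast
      then show ?thesis by blast
    qed
  qed
  from this[of "v 2 + k + 1"] k show ?thesis using that by auto
qed
end

locale complete_valuation = normalized_valuation +
  assumes complete: "val_complete v"
begin

text \<open>The root is the limit of the fixed point iteration \<open>h \<mapsto> \<rho> - h\<^sup>2\<close>, which is contracting
  on elements of positive valuation.\<close>
lemma ex_root_square_plus_self:
  assumes \<rho>: "val_ge \<rho> 1"
  obtains L where "L\<^sup>2 + L = \<rho>"
proof -
  define h :: "nat \<Rightarrow> 'a" where "h n = ((\<lambda>x. \<rho> - x\<^sup>2) ^^ n) 0" for n
  have h0: "h 0 = 0" and hS: "h (Suc n) = \<rho> - (h n)\<^sup>2" for n by (simp_all add: h_def)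
  have h_pos: "val_ge (h n) 1" for n
  proof (induction n)
    case (Suc n)
    have "val_ge ((h n)\<^sup>2) 1" using val_ge_mult[OF Suc Suc] by (simp add: power2_eq_square val_ge_mono)
    then show ?case unfolding hS using \<rho> by (rule val_ge_diff[rotated])
  qed (simp add: h0)
  have inc: "val_ge (h (Suc n) - h n) (int n + 1)" for n
  proof (induction n)
    case 0
    then show ?case using \<rho> by (simp add: hS h0)
  next
    case (Suc n)
    have "h (Suc (Suc n)) - h (Suc n) = - ((h (Suc n) - h n) * (h (Suc n) + h n))"
      by (simp add: hS power2_eq_square algebra_simps)
    moreover have "val_ge ((h (Suc n) - h n) * (h (Suc n) + h n)) (int n + 1 + 1)"
      using Suc.IH val_ge_add[OF h_pos h_pos] by (rule val_ge_mult)
    ultimately show ?case by simp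
  qed
  obtain L where "\<forall>N::int. \<exists>M. \<forall>n\<ge>M. h n = L \<or> N \<le> v (h n - L)"
    using complete cauchy_of_increments[OF inc] unfolding val_complete_def by blast
  then have "L\<^sup>2 + L = \<rho>" using limit_of_square_iteration hS h_pos by blast
  then show ?thesis by (rule that)
qed

lemma nonzero_square_of_val_ge:
  assumes x: "val_ge (x - 1) (2 * v 2 + 1)"
  shows "nonzero_square x"
proof -
  have v2: "0 \<le> v 2" using val_ge_two by (simp add: val_ge_def)
  have "v 4 = 2 * v 2" using val_mult[of 2 2] by simp
  then have "val_ge ((x - 1) / 4) 1" using val_ge_divide[OF _ x, of 4] by simp
  then obtain L where L: "L\<^sup>2 + L = (x - 1) / 4" using ex_root_square_plus_self by blast
  have "(1 + 2 * L)\<^sup>2 = 1 + 4 * (L\<^sup>2 + L)" by (simp add: power2_eq_square algebra_simps)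
  also have "\<dots> = x" using L by (simp add: field_simps)
  finally have sq: "(1 + 2 * L)\<^sup>2 = x" .
  have "1 + 2 * L \<noteq> 0"
  proof
    assume "1 + 2 * L = 0"
    then have "x - 1 = - 1" using sq by simp
    then show False using x v2 by (simp add: val_ge_def)
  qed
  then show ?thesis using sq by blast
qed

lemma val_deviation_le_2e:
  assumes ns: "\<not> nonzero_square x" and y: "y \<noteq> 0"
  shows "v (y\<^sup>2 * x - 1) \<le> 2 * v 2"
proof (rule ccontr)
  assume "\<not> v (y\<^sup>2 * x - 1) \<le> 2 * v 2"
  then have "nonzero_square (y\<^sup>2 * x)" by (intro nonzero_square_of_val_ge) (simp add: val_ge_def)
  then show False using ns nonzero_square_mult_iff[OF y] by simp
qed

end

locale dyadic_local_field = dyadic_valuation + complete_valuation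
begin

lemma qdef_eq_2e:
  assumes ns: "\<not> nonzero_square (1 + u)" and u: "val_ge u (2 * v 2)"
  shows "qdef v (1 + u) = ereal (2 * v 2)"
proof -
  have "v (1 + u) = 0" using val_one_plus[OF val_ge_mono[OF u]] two_pos by simp
  moreover have "ereal (2 * v 2) \<le> qdef v (1 + u)" using qdef_ge[OF ns, of 1 "2 * v 2"] u calculation by simp
  moreover have "qdef v (1 + u) \<le> ereal (2 * v 2)"
    using qdef_le[OF ns, of "2 * v 2"] val_deviation_le_2e[OF ns] calculation by simp
  ultimately show ?thesis by simp
qed

end

section \<open>Ramified quadratic extensions\<close>

lemma gFb_of_int:
  "gFb e b (ereal (real_of_int d)) = ereal (real_of_int (min (2 * d + b) (d + 2 * e)))"
  unfolding gFb_def by (simp add: min_def)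

lemma gFb_mono: "x \<le> y \<Longrightarrow> gFb e b x \<le> gFb e b y"
  unfolding gFb_def by (intro min.mono add_right_mono ereal_mult_left_mono) auto

locale ramified_quadratic_ext =
  fixes vF :: "'f::field_char_0 \<Rightarrow> int" and vE :: "'e::field_char_0 \<Rightarrow> int"
    and i :: "'f \<Rightarrow> 'e" and s :: "'e \<Rightarrow> 'e" and \<pi> :: 'e and b :: int
  assumes F_local: "local_field_over_Q2 vF"
    and E_local: "local_field_over_Q2 vE"
    and emb: "field_emb i"
    and quad: "quadratic_over i"
    and ram: "\<And>x. x \<noteq> 0 \<Longrightarrow> vE (i x) = 2 * vF x"
    and s_add: "\<And>x y. s (x + y) = s x + s y"
    and s_mult: "\<And>x y. s (x * y) = s x * s y"
    and s_fix: "\<And>x. s (i x) = i x"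
    and s_nontriv: "s \<noteq> id"
    and unif: "vE \<pi> = 1" and pi_nz: "\<pi> \<noteq> 0"
    and b_def: "b = vE (s \<pi> - \<pi>) - 1"
    and b_odd: "odd b"
begin

sublocale F: dyadic_local_field vF
  using F_local unfolding local_field_over_Q2_def by unfold_locales auto

sublocale E: dyadic_local_field vE
  using E_local unfolding local_field_over_Q2_def by unfold_locales auto

lemma i_add [simp]: "i (x + y) = i x + i y"
  using emb unfolding field_emb_def by blast

lemma i_mult [simp]: "i (x * y) = i x * i y"
  using emb unfolding field_emb_def by blast

lemma i_1 [simp]: "i 1 = 1"
  using emb unfolding field_emb_def by blast

lemma i_0 [simp]: "i 0 = 0"
  using i_add[of 0 0] by simp

lemma i_minus [simp]: "i (- x) = - i x"
  using i_add[of x "- x"] by (simp add: eq_neg_iff_add_eq_0 add.commute)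

lemma i_diff [simp]: "i (x - y) = i x - i y"
  using i_add[of x "- y"] by simp

lemma i_power [simp]: "i (x ^ k) = i x ^ k"
  by (induction k) auto

lemma i_numeral [simp]: "i (numeral w) = numeral w"
  by (induction w) (simp_all only: numeral.simps i_add i_1)

lemma i_eq_0_iff [simp]: "i x = 0 \<longleftrightarrow> x = 0"
  using i_mult[of x "inverse x"] by (cases "x = 0") auto

lemma i_divide [simp]: "i (x / y) = i x / i y"
proof (cases "y = 0")
  case False
  then have "i (x / y) * i y = i x" by (simp flip: i_mult)
  then show ?thesis using False by (simp add: field_simps)
qed simp

lemma not_nonzero_square_of_emb: "\<not> nonzero_square (i x) \<Longrightarrow> \<not> nonzero_square x"
  by (metis i_eq_0_iff i_power)

lemma val_ge_emb: "F.val_ge x m \<Longrightarrow> E.val_ge (i x) (2 * m)"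
  by (cases "x = 0") (auto simp: F.val_ge_def E.val_ge_def ram)

lemma vE_two: "vE 2 = 2 * vF 2"
  using ram[of 2] by simp

lemma ex_coordinates: "\<exists>\<alpha> \<beta>. z = i \<alpha> + i \<beta> * \<pi>"
proof -
  obtain \<theta> where \<theta>: "\<And>z. \<exists>!ab. z = i (fst ab) + i (snd ab) * \<theta>"
    using quad unfolding quadratic_over_def by blast
  obtain a0 b0 where ab0: "\<pi> = i a0 + i b0 * \<theta>" using \<theta>[of \<pi>] by auto
  have "b0 \<noteq> 0"
  proof
    assume "b0 = 0"
    then have "vE \<pi> = 2 * vF a0" using ab0 pi_nz ram by auto
    then show False using unif by presburger
  qed
  obtain a1 b1 where "z = i a1 + i b1 * \<theta>" using \<theta>[of z] by auto
  also have "\<theta> = (\<pi> - i a0) / i b0" using ab0 \<open>b0 \<noteq> 0\<close> by (simp add: field_simps)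
  finally have "z = i (a1 - b1 * a0 / b0) + i (b1 / b0) * \<pi>"
    using \<open>b0 \<noteq> 0\<close> by (simp add: field_simps)
  then show ?thesis by blast
qed

lemma ex_trace_norm: "\<exists>t n. \<pi>\<^sup>2 = i t * \<pi> - i n \<and> s \<pi> = i t - \<pi>"
proof -
  obtain p0 p1 where p: "\<pi>\<^sup>2 = i p0 + i p1 * \<pi>" using ex_coordinates[of "\<pi>\<^sup>2"] by blast
  have s_coord: "s (i \<alpha> + i \<beta> * \<pi>) = i \<alpha> + i \<beta> * s \<pi>" for \<alpha> \<beta>
    by (simp add: s_add s_mult s_fix)
  have "(s \<pi>)\<^sup>2 = i p0 + i p1 * s \<pi>"
    using arg_cong[OF p, of s] by (simp add: s_coord power2_eq_square s_mult)
  then have "(s \<pi> - \<pi>) * (s \<pi> - (i p1 - \<pi>)) = 0"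
    using p by (simp add: power2_eq_square algebra_simps)
  moreover have "s \<pi> \<noteq> \<pi>"
  proof
    assume "s \<pi> = \<pi>"
    then have "s z = z" for z using ex_coordinates[of z] s_coord by auto
    then show False using s_nontriv by auto
  qed
  ultimately have "s \<pi> = i p1 - \<pi>" by simp
  moreover have "\<pi>\<^sup>2 = i p1 * \<pi> - i (- p0)" using p by simp
  ultimately show ?thesis by blast
qed

end

text \<open>\<open>t\<close> and \<open>n\<close> are the trace and the norm of \<open>\<pi>\<close> over \<open>F\<close>.\<close>
locale eisenstein_uniformizer = ramified_quadratic_ext +
  fixes t n
  assumes pi_square: "\<pi>\<^sup>2 = i t * \<pi> - i n"
    and conj_pi: "s \<pi> = i t - \<pi>"
begin

lemma trace_val: "t \<noteq> 0" "2 * vF t = b + 1" "b < 2 * vF 2"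
proof -
  have two_pi: "2 * \<pi> \<noteq> 0" "vE (2 * \<pi>) = 2 * vF 2 + 1"
    using E.val_mult[of 2 \<pi>] pi_nz vE_two unif by auto
  have b: "b + 1 = vE (i t - 2 * \<pi>)" using b_def conj_pi by simp
  have "b + 1 \<noteq> 2 * vF 2 + 1" "2 * vF t \<noteq> 2 * vF 2 + 1" using b_odd by presburger+
  moreover have t: "t \<noteq> 0" using b two_pi calculation by (cases "t = 0") auto
  ultimately have "b + 1 = min (2 * vF t) (2 * vF 2 + 1)"
    using E.val_add_of_val_ne[of "i t" "- (2 * \<pi>)"] b two_pi ram[of t] by simp
  then show "t \<noteq> 0" "2 * vF t = b + 1" "b < 2 * vF 2"
    using t \<open>b + 1 \<noteq> 2 * vF 2 + 1\<close> by (auto simp: min_def split: if_splits)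
qed

lemma norm_val: "n \<noteq> 0" "vF n = 1" and break_pos: "0 < b"
proof -
  have t: "i t \<noteq> 0" "vE (i t) = b + 1" using trace_val ram by auto
  moreover have "b + 1 \<noteq> 1" using b_odd by presburger
  ultimately have "i t - \<pi> \<noteq> 0" "vE (i t - \<pi>) = min (b + 1) 1"
    using E.val_add_of_val_ne[of "i t" "- \<pi>"] pi_nz unif by simp_all
  moreover have "i n = \<pi> * (i t - \<pi>)" using pi_square by (simp add: power2_eq_square algebra_simps)
  ultimately have "i n \<noteq> 0" "vE (i n) = 1 + min (b + 1) 1"
    using E.val_mult[of \<pi>] pi_nz unif by auto
  then show "n \<noteq> 0" by simp
  then have n: "2 * vF n = 1 + min (b + 1) 1" using ram \<open>vE (i n) = 1 + min (b + 1) 1\<close> by simp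
  have "\<not> b + 1 \<le> 1"
  proof
    assume "b + 1 \<le> 1"
    then have "2 * vF n = b + 2" using n by simp
    then show False using b_odd by presburger
  qed
  then show "vF n = 1" "0 < b" using n by auto
qed

lemma square_coordinates:
  "(i x + i y * \<pi>)\<^sup>2 = i (x\<^sup>2 - n * y\<^sup>2) + i (y * (2 * x + y * t)) * \<pi>"
proof -
  have "(i x + i y * \<pi>)\<^sup>2 = (i x)\<^sup>2 + 2 * i x * i y * \<pi> + (i y)\<^sup>2 * \<pi>\<^sup>2"
    by (simp add: power2_eq_square algebra_simps)
  then show ?thesis unfolding pi_square by (simp add: power2_eq_square algebra_simps)
qed

lemma pi_coordinate_val:
  assumes c: "F.val_ge c 1" and a: "a \<noteq> 0" "vF a = k"
  shows "E.val_ge (i (a * (2 * (1 + c) + a * t)) * \<pi>) (2 * (k + min (vF 2) (k + vF t)) + 1)"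
    and "k + vF t \<noteq> vF 2 \<Longrightarrow> i (a * (2 * (1 + c) + a * t)) * \<pi> \<noteq> 0 \<and>
      vE (i (a * (2 * (1 + c) + a * t)) * \<pi>) = 2 * (k + min (vF 2) (k + vF t)) + 1"
proof -
  define W where "W = 2 * (1 + c) + a * t"
  define \<mu> where "\<mu> = min (vF 2) (k + vF t)"
  have "1 + c \<noteq> 0" "vF (1 + c) = 0" using F.val_one_plus[OF c] by auto
  then have W1: "2 * (1 + c) \<noteq> 0" "vF (2 * (1 + c)) = vF 2"
    using F.val_mult[of 2 "1 + c"] by (auto simp del: distrib_left_numeral)
  have W2: "a * t \<noteq> 0" "vF (a * t) = k + vF t" using F.val_mult[of a t] a trace_val by auto
  have "F.val_ge W \<mu>" unfolding W_def \<mu>_def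
    using W1 W2 by (intro F.val_ge_add) (auto simp: F.val_ge_def)
  from F.val_ge_mult[OF F.val_ge_val[of a] this] have "F.val_ge (a * W) (k + \<mu>)" using a by simp
  from E.val_ge_mult[OF val_ge_emb[OF this] E.val_ge_val[of \<pi>]]
  show "E.val_ge (i (a * (2 * (1 + c) + a * t)) * \<pi>) (2 * (k + min (vF 2) (k + vF t)) + 1)"
    using unif unfolding W_def \<mu>_def by simp
  assume "k + vF t \<noteq> vF 2"
  then have "W \<noteq> 0" "vF W = \<mu>"
    using F.val_add_of_val_ne[of "2 * (1 + c)" "a * t"] W1 W2 unfolding W_def \<mu>_def by auto
  then have "i (a * W) * \<pi> \<noteq> 0 \<and> vE (i (a * W) * \<pi>) = 2 * (k + \<mu>) + 1"
    using a ram[of "a * W"] F.val_mult[of a W] E.val_mult[of "i (a * W)" \<pi>] pi_nz unif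
    by (simp del: i_mult)
  then show "i (a * (2 * (1 + c) + a * t)) * \<pi> \<noteq> 0 \<and>
      vE (i (a * (2 * (1 + c) + a * t)) * \<pi>) = 2 * (k + min (vF 2) (k + vF t)) + 1"
    unfolding W_def \<mu>_def .
qed

lemma ex_square_close_to_one_plus:
  assumes u: "F.odd_val_below_2e u"
  obtains Z where "Z \<noteq> 0" "vE Z = 0"
    "E.val_ge (i (1 + u) - Z\<^sup>2) (min (2 * vF u + b) (vF u + 2 * vF 2))"
    "vF u \<noteq> 2 * vF 2 - b \<Longrightarrow>
      i (1 + u) - Z\<^sup>2 \<noteq> 0 \<and> vE (i (1 + u) - Z\<^sup>2) = min (2 * vF u + b) (vF u + 2 * vF 2)"
proof -
  obtain k where u': "u \<noteq> 0" "vF u = 2 * k + 1" and k: "0 \<le> k" "k < vF 2"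
    using u by (rule F.odd_val_below_2eE)
  define g where "g = min (2 * vF u + b) (vF u + 2 * vF 2)"
  have g: "g = 2 * (k + min (vF 2) (k + vF t)) + 1" unfolding g_def u'(2) using trace_val
    by (simp add: min_def)
  obtain a c where a: "a \<noteq> 0" "vF a = k" and c: "F.val_ge c 1"
    and P: "F.val_ge (1 + u - ((1 + c)\<^sup>2 - n * a\<^sup>2)) (vF 2 + k + 1)"
    using F.approx_norm_form[OF norm_val(1,2) u' k] .
  define X where "X = i (1 + u - ((1 + c)\<^sup>2 - n * a\<^sup>2))"
  define Y where "Y = i (a * (2 * (1 + c) + a * t)) * \<pi>"
  define Z where "Z = i (1 + c) + i a * \<pi>"
  have dev: "i (1 + u) - Z\<^sup>2 = X - Y"
    unfolding X_def Y_def Z_def square_coordinates by (simp add: algebra_simps)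
  have "E.val_ge (i c + i a * \<pi>) 1"
    using val_ge_emb[OF c] E.val_ge_mult[OF E.val_ge_val[of "i a"] E.val_ge_val[of \<pi>]] a k ram unif
    by (intro E.val_ge_add) (auto simp: E.val_ge_def)
  then have Z: "Z \<noteq> 0" "vE Z = 0" using E.val_one_plus unfolding Z_def by (simp_all add: add.assoc)
  have X: "E.val_ge X (g + 1)"
    using E.val_ge_mono[OF val_ge_emb[OF P]] unfolding X_def g by simp
  have Y: "E.val_ge Y g" "vF u \<noteq> 2 * vF 2 - b \<Longrightarrow> Y \<noteq> 0 \<and> vE Y = g"
    using pi_coordinate_val[OF c a] trace_val u'(2) unfolding Y_def g by auto
  have "E.val_ge (X - Y) g" using E.val_ge_mono[OF X] Y(1) by (intro E.val_ge_diff) simp_all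
  moreover have "vF u \<noteq> 2 * vF 2 - b \<Longrightarrow> X - Y \<noteq> 0 \<and> vE (X - Y) = g"
    using E.val_add_of_val_ge[of "- Y" X] X Y(2) by simp
  ultimately show ?thesis using that[of Z] Z unfolding dev g_def by blast
qed

lemma lift_odd_deviation:
  assumes u: "F.odd_val_below_2e u"
  obtains Y where "Y \<noteq> 0" "E.val_ge (Y\<^sup>2 * i (1 + u) - 1) (min (2 * vF u + b) (vF u + 2 * vF 2))"
    "vF u \<noteq> 2 * vF 2 - b \<Longrightarrow> Y\<^sup>2 * i (1 + u) - 1 \<noteq> 0 \<and>
      vE (Y\<^sup>2 * i (1 + u) - 1) = min (2 * vF u + b) (vF u + 2 * vF 2)"
proof -
  obtain Z where Z: "Z \<noteq> 0" "vE Z = 0"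
    "E.val_ge (i (1 + u) - Z\<^sup>2) (min (2 * vF u + b) (vF u + 2 * vF 2))"
    "vF u \<noteq> 2 * vF 2 - b \<Longrightarrow>
      i (1 + u) - Z\<^sup>2 \<noteq> 0 \<and> vE (i (1 + u) - Z\<^sup>2) = min (2 * vF u + b) (vF u + 2 * vF 2)"
    by (rule ex_square_close_to_one_plus[OF u]) blast
  have "(inverse Z)\<^sup>2 * i (1 + u) - 1 = (i (1 + u) - Z\<^sup>2) / Z\<^sup>2"
    using Z by (simp add: field_simps)
  then show ?thesis
    using that[of "inverse Z"] Z E.val_ge_divide[of "Z\<^sup>2"] E.val_divide[of _ "Z\<^sup>2"] E.val_square
    by (simp del: i_add)
qed

lemma ex_square_mult_near_one_mod_break:
  assumes x: "x \<noteq> 0" "even (vF x)"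
  obtains Y where "Y \<noteq> 0" "E.val_ge (Y\<^sup>2 * i x - 1) (b + 1)"
proof -
  obtain C where C: "C \<noteq> 0" "F.val_ge (C\<^sup>2 * x - 1) (2 * vF 2) \<or> F.odd_val_below_2e (C\<^sup>2 * x - 1)"
    using F.ex_square_mult_normal_form[OF x] .
  define u where "u = C\<^sup>2 * x - 1"
  have "\<exists>Y. Y \<noteq> 0 \<and> E.val_ge (Y\<^sup>2 * i (1 + u) - 1) (b + 1)"
  proof (cases "F.val_ge u (2 * vF 2)")
    case True
    from val_ge_emb[OF True] have "E.val_ge (i u) (b + 1)"
      by (rule E.val_ge_mono) (use trace_val F.two_pos in simp)
    then show ?thesis by (intro exI[of _ 1]) simp
  next
    case False
    with C(2) have u: "F.odd_val_below_2e u" unfolding u_def by blast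
    obtain Y where Y: "Y \<noteq> 0"
      "E.val_ge (Y\<^sup>2 * i (1 + u) - 1) (min (2 * vF u + b) (vF u + 2 * vF 2))"
      by (rule lift_odd_deviation[OF u]) blast
    have "E.val_ge (Y\<^sup>2 * i (1 + u) - 1) (b + 1)"
      using Y(2) by (rule E.val_ge_mono) (use u trace_val in \<open>simp add: F.odd_val_below_2e_def\<close>)
    then show ?thesis using Y(1) by blast
  qed
  then obtain Y where "Y \<noteq> 0" "E.val_ge (Y\<^sup>2 * i (1 + u) - 1) (b + 1)" by blast
  moreover have "i (1 + u) = (i C)\<^sup>2 * i x" unfolding u_def by simp
  ultimately show ?thesis using that[of "Y * i C"] C(1) by (simp add: power_mult_distrib mult.assoc)
qed

lemma qdef_of_odd_val:
  assumes \<kappa>: "\<kappa> \<noteq> 0" "odd (vF \<kappa>)" and ns: "\<not> nonzero_square (i \<kappa>)"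
  shows "qdef vF \<kappa> = 0" "qdef vE (i \<kappa>) = b"
proof -
  show "qdef vF \<kappa> = 0" using \<kappa> not_nonzero_square_of_emb[OF ns] unfolding qdef_def by simp
  obtain j where j: "vF \<kappa> = 2 * j + 1" using \<kappa>(2) by (rule oddE)
  obtain C where C: "C \<noteq> 0" "vF C = - j" using F.ex_val by blast
  define x where "x = - (C\<^sup>2 * \<kappa> / n)"
  have x: "x \<noteq> 0" "vF x = 0"
    using F.val_divide[of "C\<^sup>2 * \<kappa>" n] F.val_mult[of "C\<^sup>2" \<kappa>] F.val_square[of C] C \<kappa> j norm_val
    unfolding x_def by simp_all
  obtain Y where Y: "Y \<noteq> 0" "E.val_ge (Y\<^sup>2 * i x - 1) (b + 1)"
    by (rule ex_square_mult_near_one_mod_break[of x]) (use x in simp_all)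
  define M where "M = Y * i C / \<pi>"
  define \<tau> where "\<tau> = i t / \<pi>"
  have \<tau>: "\<tau> \<noteq> 0" "vE \<tau> = b"
    using E.val_divide[of "i t" \<pi>] ram[of t] trace_val pi_nz unif unfolding \<tau>_def by auto
  have "(i C)\<^sup>2 * i \<kappa> = - (i x * i n)" using norm_val unfolding x_def by (simp add: field_simps)
  also have "i n = \<pi> * (i t - \<pi>)" using pi_square by (simp add: power2_eq_square algebra_simps)
  finally have "M\<^sup>2 * i \<kappa> = Y\<^sup>2 * - (i x * (\<pi> * (i t - \<pi>))) / \<pi>\<^sup>2"
    unfolding M_def by (simp add: power_mult_distrib power_divide mult.assoc)
  also have "\<dots> = (Y\<^sup>2 * i x) * (1 - \<tau>)"
    using pi_nz unfolding \<tau>_def by (simp add: field_simps power2_eq_square)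
  finally have dev: "M\<^sup>2 * i \<kappa> - 1 = - \<tau> + (Y\<^sup>2 * i x - 1) * (1 - \<tau>)" by (simp add: algebra_simps)
  have "E.val_ge (1 - \<tau>) 0" using \<tau> break_pos by (intro E.val_ge_diff) (auto simp: E.val_ge_def)
  then have "E.val_ge ((Y\<^sup>2 * i x - 1) * (1 - \<tau>)) (b + 1 + 0)" using Y(2) by (intro E.val_ge_mult)
  then have "M\<^sup>2 * i \<kappa> - 1 \<noteq> 0" "vE (M\<^sup>2 * i \<kappa> - 1) = b"
    using E.val_add_of_val_ge[of "- \<tau>"] \<tau> unfolding dev by simp_all
  moreover have "E.odd_val_below_2e (M\<^sup>2 * i \<kappa> - 1)"
    using calculation b_odd break_pos trace_val vE_two unfolding E.odd_val_below_2e_def by simp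
  moreover have M: "M \<noteq> 0" using Y C pi_nz unfolding M_def by simp
  then have "\<not> nonzero_square (M\<^sup>2 * i \<kappa>)" using nonzero_square_mult_iff[of M "i \<kappa>"] ns by blast
  ultimately have "qdef vE (M\<^sup>2 * i \<kappa>) = b" using E.qdef_eq_odd_deviation by simp
  then show "qdef vE (i \<kappa>) = b" using E.qdef_square_mult[OF M] \<kappa>(1) by simp
qed

lemma qdef_of_odd_deviation:
  assumes u: "F.odd_val_below_2e u" and ns: "\<not> nonzero_square (i (1 + u))"
  shows "qdef vF (1 + u) = vF u" "gFb (vF 2) b (vF u) \<le> qdef vE (i (1 + u))"
    "vF u \<noteq> 2 * vF 2 - b \<Longrightarrow> qdef vE (i (1 + u)) = gFb (vF 2) b (vF u)"
proof -
  show "qdef vF (1 + u) = vF u"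
    using F.qdef_eq_odd_deviation[of "1 + u"] u not_nonzero_square_of_emb[OF ns] by simp
  define g where "g = min (2 * vF u + b) (vF u + 2 * vF 2)"
  have g: "gFb (vF 2) b (vF u) = g" unfolding g_def gFb_of_int ..
  obtain Y where Y: "Y \<noteq> 0" "E.val_ge (Y\<^sup>2 * i (1 + u) - 1) g"
      "vF u \<noteq> 2 * vF 2 - b \<Longrightarrow> Y\<^sup>2 * i (1 + u) - 1 \<noteq> 0 \<and> vE (Y\<^sup>2 * i (1 + u) - 1) = g"
    unfolding g_def by (rule lift_odd_deviation[OF u]) blast
  have unit_F: "1 + u \<noteq> 0" "vF (1 + u) = 0"
    using F.val_one_plus[of u] u by (simp_all add: F.val_ge_def F.odd_val_below_2e_def)
  then have unit: "vE (i (1 + u)) = 0" using ram[of "1 + u"] by simp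
  show "gFb (vF 2) b (vF u) \<le> qdef vE (i (1 + u))"
    using E.qdef_ge[OF ns _ Y(1,2)] unit g by simp
  assume dev: "vF u \<noteq> 2 * vF 2 - b"
  then have "E.odd_val_below_2e (Y\<^sup>2 * i (1 + u) - 1)"
    using Y(3) u b_odd break_pos trace_val vE_two
    unfolding E.odd_val_below_2e_def F.odd_val_below_2e_def g_def by (auto simp: min_def)
  moreover have "\<not> nonzero_square (Y\<^sup>2 * i (1 + u))"
    using nonzero_square_mult_iff[OF Y(1), of "i (1 + u)"] ns by blast
  ultimately have "qdef vE (Y\<^sup>2 * i (1 + u)) = g"
    using E.qdef_eq_odd_deviation Y(3) dev by simp
  then show "qdef vE (i (1 + u)) = gFb (vF 2) b (vF u)"
    using E.qdef_square_mult[OF Y(1), of "i (1 + u)"] unit_F g by (simp del: i_add)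
qed

lemma qdef_of_deep_deviation:
  assumes u: "F.val_ge u (2 * vF 2)" and ns: "\<not> nonzero_square (i (1 + u))"
  shows "qdef vF (1 + u) = 2 * vF 2" "qdef vE (i (1 + u)) = gFb (vF 2) b (2 * vF 2)"
proof -
  show "qdef vF (1 + u) = 2 * vF 2" using F.qdef_eq_2e[OF not_nonzero_square_of_emb[OF ns] u] by simp
  have "E.val_ge (i u) (2 * vE 2)" using val_ge_emb[OF u] vE_two by simp
  then have "qdef vE (i (1 + u)) = 2 * vE 2" using E.qdef_eq_2e ns by simp
  then show "qdef vE (i (1 + u)) = gFb (vF 2) b (2 * vF 2)"
    using vE_two break_pos by (simp add: gFb_of_int[of _ _ "2 * vF 2", simplified])
qed

lemma qdef_ext_gFb:
  assumes \<kappa>: "\<kappa> \<noteq> 0" and ns: "\<not> nonzero_square (i \<kappa>)"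
  obtains d :: int where "qdef vF \<kappa> = d" "gFb (vF 2) b d \<le> qdef vE (i \<kappa>)"
    "d \<noteq> 2 * vF 2 - b \<Longrightarrow> qdef vE (i \<kappa>) = gFb (vF 2) b d"
proof (cases "odd (vF \<kappa>)")
  case True
  have "gFb (vF 2) b 0 = b" using gFb_of_int[of "vF 2" b 0] trace_val by (simp add: zero_ereal_def)
  then show ?thesis using that[of 0] qdef_of_odd_val[OF \<kappa> True ns] by (simp add: zero_ereal_def)
next
  case False
  then obtain C where C: "C \<noteq> 0"
    "F.val_ge (C\<^sup>2 * \<kappa> - 1) (2 * vF 2) \<or> F.odd_val_below_2e (C\<^sup>2 * \<kappa> - 1)"
    using F.ex_square_mult_normal_form[OF \<kappa>] by blast
  define u where "u = C\<^sup>2 * \<kappa> - 1"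
  have "i (1 + u) = (i C)\<^sup>2 * i \<kappa>" unfolding u_def by simp
  then have ns': "\<not> nonzero_square (i (1 + u))"
    using nonzero_square_mult_iff[of "i C" "i \<kappa>"] C(1) ns by simp
  have qF: "qdef vF \<kappa> = qdef vF (1 + u)" using F.qdef_square_mult[OF C(1) \<kappa>] unfolding u_def by simp
  have qE: "qdef vE (i \<kappa>) = qdef vE (i (1 + u))"
    using E.qdef_square_mult[of "i C" "i \<kappa>"] C(1) \<kappa> unfolding u_def by simp
  show ?thesis
  proof (cases "F.val_ge u (2 * vF 2)")
    case True
    then show ?thesis using that[of "2 * vF 2"] qdef_of_deep_deviation[OF True ns'] qF qE by simp
  next
    case False
    then have "F.odd_val_below_2e u" using C(2) unfolding u_def by blast
    then show ?thesis using that[of "vF u"] qdef_of_odd_deviation[OF _ ns'] qF qE by simp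
  qed
qed

end

theorem lemma2p1:
  fixes vF :: "'f::field_char_0 \<Rightarrow> int" and vE :: "'e::field_char_0 \<Rightarrow> int"
    and i :: "'f \<Rightarrow> 'e" and s :: "'e \<Rightarrow> 'e" and \<pi> :: 'e and b :: int and \<kappa> :: 'f
  assumes F: "local_field_over_Q2 vF"
    and E: "local_field_over_Q2 vE"
    and emb: "field_emb i"
    and quad: "quadratic_over i"
    and ram: "\<And>x. x \<noteq> 0 \<Longrightarrow> vE (i x) = 2 * vF x"
    and s_add: "\<And>x y. s (x + y) = s x + s y"
    and s_mult: "\<And>x y. s (x * y) = s x * s y"
    and s_bij: "bij s"
    and s_fix: "\<And>x. s (i x) = i x"
    and s_nontriv: "s \<noteq> id"
    and unif: "vE \<pi> = 1" and pi_nz: "\<pi> \<noteq> 0"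
    and b_def: "b = vE (s \<pi> - \<pi>) - 1"
    and b_odd: "odd b"
    and \<kappa>_nz: "\<kappa> \<noteq> 0"
    and \<kappa>_nsq: "\<not> (\<exists>c. c \<noteq> 0 \<and> i \<kappa> = c\<^sup>2)"
  shows "qdef vE (i \<kappa>) \<ge> gFb (abs_ram_index vF) b (qdef vF \<kappa>)
    \<and> (qdef vF \<kappa> \<noteq> ereal (real_of_int (2 * abs_ram_index vF - b)) \<longrightarrow>
         qdef vE (i \<kappa>) = gFb (abs_ram_index vF) b (qdef vF \<kappa>))
    \<and> (\<forall>\<delta>::int. 0 \<le> \<delta> \<longrightarrow> qdef vF \<kappa> \<ge> ereal (real_of_int \<delta>) \<longrightarrow>
         qdef vE (i \<kappa>) \<ge> gFb (abs_ram_index vF) b (ereal (real_of_int \<delta>))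
         \<and> gFb (abs_ram_index vF) b (ereal (real_of_int \<delta>)) \<ge> ereal (real_of_int b))"
proof -
  interpret ramified_quadratic_ext vF vE i s \<pi> b
    using F E emb quad ram s_add s_mult s_fix s_nontriv unif pi_nz b_def b_odd
    by unfold_locales auto
  obtain t n where "\<pi>\<^sup>2 = i t * \<pi> - i n" "s \<pi> = i t - \<pi>" using ex_trace_norm by blast
  then interpret eisenstein_uniformizer vF vE i s \<pi> b t n
    by unfold_locales
  obtain d :: int where d: "qdef vF \<kappa> = d" "gFb (vF 2) b d \<le> qdef vE (i \<kappa>)"
      "d \<noteq> 2 * vF 2 - b \<Longrightarrow> qdef vE (i \<kappa>) = gFb (vF 2) b d"
    using qdef_ext_gFb[OF \<kappa>_nz \<kappa>_nsq] by blast
  have "gFb (vF 2) b \<delta> \<le> qdef vE (i \<kappa>)" if "\<delta> \<le> qdef vF \<kappa>" for \<delta>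
    using gFb_mono[OF that[unfolded d(1)], of "vF 2" b] d(2) by (rule order_trans)
  moreover have "ereal b \<le> gFb (vF 2) b \<delta>" if "0 \<le> \<delta>" for \<delta> :: int
    using trace_val that by (simp add: gFb_of_int)
  ultimately show ?thesis unfolding abs_ram_index_def using d by auto
qed

end
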